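(* Let $T$ be a tree with leaves $1,\dots,n$ in which every non-leaf node has degree $3$, and let $i,j$ be two leaves of $T$. Let $\alpha,\beta\in[-1,1]^{\binom n2}$ satisfy $\alpha_{kl}=\beta_{kl}$ for all pairs $(k,l)\neq(i,j)$. Define $\gamma\in[-1,1]^{\binom n2}$ by $\gamma_{kl}=0$ if the paths $P_{ij}$ and $P_{kl}$ have a common edge, and $\gamma_{kl}=\alpha_{kl}$ otherwise. Then for every $x\in\{-1,1\}^n$, $$f_x^T(\alpha)-f_x^T(\beta) = x_ix_j(\alpha_{ij}-\beta_{ij})\, f_x^{T\setminus\{i,j\}}(\gamma).$$
   Context: $P_{kl}$ denotes the path between nodes $k,l$. For a forest $F$ whose set of labeled leaves is $\{1,\dots,n\}$ and an even-cardinality subset $S\subseteq[n]$, a closest relative matching of $S$ in $F$ is a partition of $S$ into pairs such that each pair lies in a common connected component of $F$ and the paths (in $F$) joining distinct pairs are edge-disjoint; when it exists it is unique. For $\alpha\in[-1,1]^{\binom n2}$ let $\alpha^F_S=\prod_{(a,b)}\alpha_{ab}$ over the pairs of this matching (and $\alpha^F_\emptyset=1$). Define $f_x^F(\alpha)=2^{-n}\sum_{S}\alpha^F_S\prod_{k\in S}x_k$, the sum over even subsets $S\subseteq[n]$ admitting a closest relative matching in $F$ (for a tree $F$ this is every even subset). For a tree this is defined for arbitrary $\alpha$, and when $\alpha$ is the vector of leaf correlations of a tree Ising model on $T$, $f_x^T(\alpha)$ is the probability of leaf configuration $x$. $T\setminus\{i,j\}$ denotes the forest obtained from $T$ by removing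 all edges of the path $P_{ij}$ (keeping all nodes, with the same leaf labels). *)

theory Defs
  imports Complex_Main
begin

definition is_path :: "'v set set \<Rightarrow> 'v \<Rightarrow> 'v \<Rightarrow> 'v list \<Rightarrow> bool" where
  "is_path E u v ps \<longleftrightarrow> ps \<noteq> [] \<and> hd ps = u \<and> last ps = v \<and> distinct ps \<and>
     (\<forall>k. Suc k < length ps \<longrightarrow> {ps ! k, ps ! Suc k} \<in> E)"

definition path_edges :: "'v list \<Rightarrow> 'v set set" where
  "path_edges ps = {{ps ! k, ps ! Suc k} | k. Suc k < length ps}"

definition is_cycle :: "'v set set \<Rightarrow> 'v list \<Rightarrow> bool" where
  "is_cycle E cs \<longleftrightarrow> length cs \<ge> 3 \<and> distinct cs \<and>
     (\<forall>k. Suc k < length cs \<longrightarrow> {cs ! k, cs ! Suc k} \<in> E) \<and> {last cs, hd cs} \<in> E"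

definition is_tree :: "'v set \<Rightarrow> 'v set set \<Rightarrow> bool" where
  "is_tree V E \<longleftrightarrow> finite V \<and> V \<noteq> {} \<and> (\<forall>e\<in>E. e \<subseteq> V \<and> card e = 2) \<and>
     (\<forall>u\<in>V. \<forall>v\<in>V. \<exists>ps. is_path E u v ps) \<and> \<not> (\<exists>cs. is_cycle E cs)"

definition degree :: "'v set set \<Rightarrow> 'v \<Rightarrow> nat" where
  "degree E v = card {e \<in> E. v \<in> e}"

text \<open>Edge set of the (unique, in a forest) path between u and v.\<close>
definition pedges :: "'v set set \<Rightarrow> 'v \<Rightarrow> 'v \<Rightarrow> 'v set set" where
  "pedges E u v = path_edges (THE ps. is_path E u v ps)"

definition pair_edges :: "'v set set \<Rightarrow> (nat \<Rightarrow> 'v) \<Rightarrow> nat set \<Rightarrow> 'v set set" where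
  "pair_edges E lf p = pedges E (lf (Min p)) (lf (Max p))"

definition crm :: "'v set set \<Rightarrow> (nat \<Rightarrow> 'v) \<Rightarrow> nat set \<Rightarrow> nat set set \<Rightarrow> bool" where
  "crm E lf S M \<longleftrightarrow>
     (\<forall>p\<in>M. card p = 2) \<and> \<Union>M = S \<and> (\<forall>p\<in>M. \<forall>q\<in>M. p \<noteq> q \<longrightarrow> p \<inter> q = {}) \<and>
     (\<forall>p\<in>M. \<exists>ps. is_path E (lf (Min p)) (lf (Max p)) ps) \<and>
     (\<forall>p\<in>M. \<forall>q\<in>M. p \<noteq> q \<longrightarrow> pair_edges E lf p \<inter> pair_edges E lf q = {})"

definition alphaF :: "'v set set \<Rightarrow> (nat \<Rightarrow> 'v) \<Rightarrow> (nat set \<Rightarrow> real) \<Rightarrow> nat set \<Rightarrow> real" where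
  "alphaF E lf \<alpha> S = (\<Prod>p\<in>(THE M. crm E lf S M). \<alpha> p)"

definition fF :: "'v set set \<Rightarrow> (nat \<Rightarrow> 'v) \<Rightarrow> nat \<Rightarrow> (nat set \<Rightarrow> real) \<Rightarrow> (nat \<Rightarrow> real) \<Rightarrow> real" where
  "fF E lf n \<alpha> x = (1 / 2 ^ n) *
     (\<Sum>S\<in>{S. S \<subseteq> {1..n} \<and> even (card S) \<and> (\<exists>M. crm E lf S M)}.
        alphaF E lf \<alpha> S * (\<Prod>k\<in>S. x k))"

definition gammaV :: "'v set set \<Rightarrow> (nat \<Rightarrow> 'v) \<Rightarrow> nat \<Rightarrow> nat \<Rightarrow> (nat set \<Rightarrow> real) \<Rightarrow> nat set \<Rightarrow> real" where
  "gammaV E lf i j \<alpha> p =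
     (if pair_edges E lf p \<inter> pedges E (lf i) (lf j) \<noteq> {} then 0 else \<alpha> p)"

end

theory Submission
  imports Defs
begin

text \<open>
  A nonempty finite acyclic edge set has a vertex of odd degree (an end of a longest path).
  Hence in a tree an edge set is determined by the set of its odd-degree vertices. The paths of a
  closest relative matching of S are edge-disjoint, so their union has exactly the leaves in S
  as odd vertices; when all inner vertices have degree at most 3 this union has maximum degree 2,
  and the matching is unique. Then alphaF is a product over the matching, and in
  f_x^T(alpha) - f_x^T(beta) only the subsets S whose matching contains {i,j} survive.
  Removing the pair {i,j} maps their matchings bijectively onto the matchings of S - {i,j} in the
  forest obtained by deleting the path P_ij, and on the pairs of these gamma agrees with alpha.
\<close>

section \<open>Paths as vertex lists\<close>

lemma path_edges_Nil [simp]: "path_edges [] = {}"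
  and path_edges_singleton [simp]: "path_edges [a] = {}"
  by (simp_all add: path_edges_def)

lemma path_edges_Cons_Cons [simp]:
  "path_edges (a # b # xs) = insert {a, b} (path_edges (b # xs))"
proof -
  have "path_edges ps = (\<lambda>k. {ps ! k, ps ! Suc k}) ` {..<length ps - 1}" for ps :: "'a list"
    by (auto simp: path_edges_def)
  then show ?thesis
    by (simp add: lessThan_Suc_eq_insert_0 image_image del: lessThan_Suc)
qed

lemma finite_path_edges [simp]: "finite (path_edges ps)"
  by (induction ps rule: induct_list012) auto

lemma path_edges_subset_set: "e \<in> path_edges ps \<Longrightarrow> e \<subseteq> set ps"
  by (auto simp: path_edges_def)

lemma set_subset_Union_path_edges: "2 \<le> length ps \<Longrightarrow> set ps \<subseteq> \<Union>(path_edges ps)"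
proof (induction ps rule: induct_list012)
  case (3 x y zs)
  then show ?case
    by (cases zs) auto
qed auto

lemma path_edges_take_subset: "path_edges (take m ps) \<subseteq> path_edges ps"
  by (fastforce simp: path_edges_def)

lemma path_edges_append_singleton:
  "ps \<noteq> [] \<Longrightarrow> path_edges (ps @ [w]) = insert {last ps, w} (path_edges ps)"
  by (induction ps rule: induct_list012) auto

lemma path_edges_rev [simp]: "path_edges (rev ps) = path_edges ps"
proof (induction ps)
  case (Cons x xs)
  show ?case
  proof (cases xs)
    case (Cons y ys)
    have "path_edges (rev (x # xs)) = insert {last (rev xs), x} (path_edges (rev xs))"
      unfolding rev.simps(2) by (rule path_edges_append_singleton) (simp add: Cons)
    then show ?thesis
      using \<open>path_edges (rev xs) = path_edges xs\<close> Cons by (simp add: last_rev insert_commute)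
  qed simp
qed simp

lemma is_path_iff:
  "is_path E u v ps \<longleftrightarrow> ps \<noteq> [] \<and> hd ps = u \<and> last ps = v \<and> distinct ps \<and> path_edges ps \<subseteq> E"
  by (auto simp: is_path_def path_edges_def)

lemma is_path_rev: "is_path E u v ps \<Longrightarrow> is_path E v u (rev ps)"
  by (simp add: is_path_iff hd_rev last_rev)

lemma is_path_mono: "is_path E u v ps \<Longrightarrow> E \<subseteq> F \<Longrightarrow> is_path F u v ps"
  by (auto simp: is_path_iff)

lemma is_path_same: "is_path E u u ps \<Longrightarrow> ps = [u]"
proof (cases ps)
  case (Cons x xs)
  moreover assume "is_path E u u ps"
  ultimately have "x \<notin> set xs" "last (x # xs) = x" "x = u"
    by (auto simp: is_path_iff)
  then show ?thesis
    using Cons by (metis last_ConsR last_in_set)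
qed (simp add: is_path_iff)

lemma is_path_ConsE:
  assumes "is_path E u v ps" "u \<noteq> v"
  obtains w ws where "ps = u # w # ws" "{u, w} \<in> E"
proof (cases ps)
  case (Cons x xs)
  with assms show ?thesis
    by (cases xs) (auto simp: is_path_iff intro: that)
qed (use assms in \<open>simp add: is_path_iff\<close>)

lemma is_path_length_ge_2: "is_path E u v ps \<Longrightarrow> u \<noteq> v \<Longrightarrow> 2 \<le> length ps"
  by (erule is_path_ConsE) auto

lemma is_cycle_iff:
  "is_cycle E cs \<longleftrightarrow> 3 \<le> length cs \<and> distinct cs \<and> path_edges cs \<subseteq> E \<and> {last cs, hd cs} \<in> E"
  by (auto simp: is_cycle_def path_edges_def)

lemma is_cycle_mono: "is_cycle E cs \<Longrightarrow> E \<subseteq> F \<Longrightarrow> is_cycle F cs"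
  by (auto simp: is_cycle_iff)

lemma is_cycle_take:
  assumes "distinct ps" "path_edges ps \<subseteq> E" "2 \<le> k" "k < length ps" "{ps ! k, hd ps} \<in> E"
  shows "is_cycle E (take (Suc k) ps)"
proof -
  have "last (take (Suc k) ps) = ps ! k"
    using assms(4) by (simp add: take_Suc_conv_app_nth)
  moreover have "hd (take (Suc k) ps) = hd ps"
    using assms(4) by (cases ps) auto
  ultimately show ?thesis
    using assms path_edges_take_subset[of "Suc k" ps] by (auto simp: is_cycle_iff)
qed

section \<open>Vertex degrees\<close>

lemma degree_empty [simp]: "degree {} v = 0"
  by (simp add: degree_def)

lemma degree_insert:
  "finite F \<Longrightarrow> e \<notin> F \<Longrightarrow> degree (insert e F) v = (if v \<in> e then Suc (degree F v) else degree F v)"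
proof -
  have "{e' \<in> insert e F. v \<in> e'} = (if v \<in> e then insert e {e' \<in> F. v \<in> e'} else {e' \<in> F. v \<in> e'})"
    by auto
  then show "finite F \<Longrightarrow> e \<notin> F \<Longrightarrow> ?thesis"
    by (simp add: degree_def)
qed

lemma degree_mono: "finite F \<Longrightarrow> A \<subseteq> F \<Longrightarrow> degree A x \<le> degree F x"
  unfolding degree_def by (rule card_mono) auto

lemma degree_UN_disjoint:
  assumes "finite I" "\<forall>i\<in>I. finite (F i)" "\<forall>i\<in>I. \<forall>j\<in>I. i \<noteq> j \<longrightarrow> F i \<inter> F j = {}"
  shows "degree (\<Union>i\<in>I. F i) x = (\<Sum>i\<in>I. degree (F i) x)"
proof -
  have "{e \<in> (\<Union>i\<in>I. F i). x \<in> e} = (\<Union>i\<in>I. {e \<in> F i. x \<in> e})"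
    by auto
  then show ?thesis
    unfolding degree_def using assms by (simp add: card_UN_disjoint disjoint_iff)
qed

lemma card_le_degree:
  assumes "finite F" "\<forall>y\<in>N. {x, y} \<in> F"
  shows "card N \<le> degree F x"
proof -
  have "inj_on (\<lambda>y. {x, y}) N"
    by (auto intro: inj_onI simp: doubleton_eq_iff)
  then have "card N = card ((\<lambda>y. {x, y}) ` N)"
    by (simp add: card_image)
  also have "\<dots> \<le> degree F x"
    unfolding degree_def using assms by (intro card_mono) auto
  finally show ?thesis .
qed

lemma two_le_degree:
  "finite F \<Longrightarrow> {x, a} \<in> F \<Longrightarrow> {x, b} \<in> F \<Longrightarrow> a \<noteq> b \<Longrightarrow> 2 \<le> degree F x"
  using card_le_degree[of F "{a, b}" x] by simp

lemma three_le_degree: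
  "finite F \<Longrightarrow> {x, a} \<in> F \<Longrightarrow> {x, b} \<in> F \<Longrightarrow> {x, c} \<in> F \<Longrightarrow> a \<noteq> b \<Longrightarrow> a \<noteq> c \<Longrightarrow> b \<noteq> c
    \<Longrightarrow> 3 \<le> degree F x"
  using card_le_degree[of F "{a, b, c}" x] by simp

lemma degree_pos_imp_edge: "0 < degree F x \<Longrightarrow> \<exists>e\<in>F. x \<in> e"
  unfolding degree_def by (auto simp: card_gt_0_iff)

lemma degree_one_edge_unique:
  assumes "degree F x = 1" "e \<in> F" "e' \<in> F" "x \<in> e" "x \<in> e'"
  shows "e = e'"
proof -
  have "card {e \<in> F. x \<in> e} = 1"
    using assms(1) by (simp add: degree_def)
  then obtain e0 where e0: "{e \<in> F. x \<in> e} = {e0}"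
    by (rule card_1_singletonE)
  have "e \<in> {e0}" "e' \<in> {e0}"
    using assms(2-) unfolding e0[symmetric] by simp_all
  then show ?thesis
    by simp
qed

lemma even_degree_sym_diff:
  assumes "finite A" "finite B"
  shows "even (degree ((A - B) \<union> (B - A)) x) \<longleftrightarrow> (even (degree A x) \<longleftrightarrow> even (degree B x))"
proof -
  define A' B' where "A' = {e \<in> A. x \<in> e}" and "B' = {e \<in> B. x \<in> e}"
  have fin: "finite A'" "finite B'"
    using assms by (simp_all add: A'_def B'_def)
  have "{e \<in> (A - B) \<union> (B - A). x \<in> e} = (A' \<union> B') - (A' \<inter> B')"
    by (auto simp: A'_def B'_def)
  moreover have "card ((A' \<union> B') - (A' \<inter> B')) = card (A' \<union> B') - card (A' \<inter> B')"
    using fin by (intro card_Diff_subset) auto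
  ultimately have "degree ((A - B) \<union> (B - A)) x = card (A' \<union> B') - card (A' \<inter> B')"
    by (simp add: degree_def)
  moreover have "card (A' \<inter> B') \<le> card (A' \<union> B')"
    using fin by (intro card_mono) auto
  ultimately have "degree ((A - B) \<union> (B - A)) x + 2 * card (A' \<inter> B') = degree A x + degree B x"
    using card_Un_Int[OF fin] by (simp add: degree_def A'_def B'_def)
  then show ?thesis
    by (metis dvd_add_left_iff dvd_triv_left even_add)
qed

lemma degree_path_edges:
  assumes "distinct ps" "2 \<le> length ps"
  shows "degree (path_edges ps) v =
    (if v \<notin> set ps then 0 else if v = hd ps \<or> v = last ps then 1 else 2)"
  using assms
proof (induction ps rule: induct_list012)
  case (3 a b xs)
  have new: "{a, b} \<notin> path_edges (b # xs)"
    using "3.prems"(1) path_edges_subset_set by fastforce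
  have step: "degree (path_edges (a # b # xs)) v =
      (if v \<in> {a, b} then Suc (degree (path_edges (b # xs)) v) else degree (path_edges (b # xs)) v)"
    by (simp add: degree_insert[OF finite_path_edges new])
  show ?case
  proof (cases xs)
    case Nil
    then show ?thesis
      using "3.prems" step by auto
  next
    case (Cons c ys)
    then have "last (b # xs) \<noteq> b" "last (b # xs) \<in> set (b # xs)"
      using "3.prems"(1) by (auto dest: last_in_set)
    moreover have "degree (path_edges (b # xs)) v =
        (if v \<notin> set (b # xs) then 0 else if v = b \<or> v = last (b # xs) then 1 else 2)"
      using "3.IH"(2) "3.prems"(1) Cons by simp
    ultimately show ?thesis
      using "3.prems"(1) step by auto
  qed
qed auto

lemma odd_degree_path_edges_iff:
  assumes "distinct ps" "2 \<le> length ps"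
  shows "odd (degree (path_edges ps) v) \<longleftrightarrow> v = hd ps \<or> v = last ps"
proof -
  have "hd ps \<in> set ps" "last ps \<in> set ps"
    using assms(2) by (auto intro: hd_in_set last_in_set)
  then show ?thesis
    using assms by (auto simp: degree_path_edges)
qed

lemma degree_path_edges_le_2: "distinct ps \<Longrightarrow> degree (path_edges ps) v \<le> 2"
proof (cases "2 \<le> length ps")
  case False
  then have "path_edges ps = {}"
    by (auto simp: path_edges_def)
  then show ?thesis
    by simp
qed (auto simp: degree_path_edges)

section \<open>Acyclic edge sets and paths in trees\<close>

lemma card_2_memE:
  assumes "card e = 2" "u \<in> e"
  obtains w where "e = {u, w}" "w \<noteq> u"
  using assms by (auto simp: card_2_iff doubleton_eq_iff)

lemma card_2_ex_mem: "card p = 2 \<Longrightarrow> \<exists>a. a \<in> p"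
  by (cases "p = {}") auto

lemma even_degree_other_edge:
  assumes "finite F" "\<forall>e\<in>F. card e = 2" "even (degree F u)" "{u, p} \<in> F"
  obtains w where "{u, w} \<in> F" "w \<noteq> u" "w \<noteq> p"
proof -
  have "\<not> {e \<in> F. u \<in> e} \<subseteq> {{u, p}}"
  proof
    assume "{e \<in> F. u \<in> e} \<subseteq> {{u, p}}"
    then have "degree F u \<le> 1"
      unfolding degree_def using card_mono[of "{{u, p}}"] by fastforce
    moreover have "1 \<le> degree F u"
      using card_le_degree[of F "{p}" u] assms(1,4) by simp
    ultimately show False
      using assms(3) by (metis le_antisym odd_one)
  qed
  then obtain e where e: "e \<in> F" "u \<in> e" "e \<noteq> {u, p}"
    by blast
  then have "card e = 2"
    using assms(2) by blast
  then obtain w where "e = {u, w}" "w \<noteq> u"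
    using e(2) by (rule card_2_memE)
  then show ?thesis
    using that[of w] e by blast
qed

lemma acyclic_even_degree_no_path:
  assumes fin: "finite F" and edges: "\<forall>e\<in>F. card e = 2" and acyclic: "\<nexists>cs. is_cycle F cs"
    and even: "\<forall>v. even (degree F v)"
    and ps: "distinct ps" "path_edges ps \<subseteq> F" "2 \<le> length ps"
  shows False
  using ps
proof (induction "card (\<Union>F) - length ps" arbitrary: ps rule: less_induct)
  case less
  then obtain u p rest where ps: "ps = u # p # rest"
    by (cases ps rule: remdups_adj.cases) auto
  then have "{u, p} \<in> F"
    using less.prems by simp
  \<comment> \<open>A second edge at u either extends the path, which decreases the measure, or closes a cycle.\<close>
  then obtain w where uw: "{u, w} \<in> F" "w \<noteq> u" "w \<noteq> p"
    using even_degree_other_edge[OF fin edges] even by blast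
  show False
  proof (cases "w \<in> set ps")
    case False
    have path: "distinct (w # ps)" "path_edges (w # ps) \<subseteq> F" "2 \<le> length (w # ps)"
      using less.prems False uw ps by (auto simp: insert_commute)
    have "finite (\<Union>F)"
      using fin edges by (intro finite_Union) (auto intro: card_ge_0_finite)
    moreover have "set (w # ps) \<subseteq> \<Union>F"
      using set_subset_Union_path_edges[OF path(3)] path(2) by blast
    ultimately have "length (w # ps) \<le> card (\<Union>F)"
      using card_mono distinct_card[OF path(1)] by metis
    then have "card (\<Union>F) - length (w # ps) < card (\<Union>F) - length ps"
      by simp
    then show False
      using less.hyps path by blast
  next
    case True
    then obtain k where k: "k < length ps" "ps ! k = w"
      by (auto simp: in_set_conv_nth)
    have "ps ! 0 = u" "ps ! Suc 0 = p"
      by (simp_all add: ps)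
    then have "k \<noteq> 0" "k \<noteq> Suc 0"
      using k(2) uw by metis+
    then have "is_cycle F (take (Suc k) ps)"
      using is_cycle_take[OF less.prems(1,2)] k uw ps by (simp add: insert_commute)
    then show False
      using acyclic by blast
  qed
qed

lemma acyclic_even_degree_empty:
  assumes "finite F" "\<forall>e\<in>F. card e = 2" "\<nexists>cs. is_cycle F cs" "\<forall>v. even (degree F v)"
  shows "F = {}"
proof (rule ccontr)
  assume "F \<noteq> {}"
  then obtain a b where "{a, b} \<in> F" "a \<noteq> b"
    using assms(2) by (metis all_not_in_conv card_2_iff)
  then show False
    using acyclic_even_degree_no_path[OF assms, of "[a, b]"] by simp
qed

lemma acyclic_edge_sets_eqI:
  assumes "\<forall>e\<in>E. card e = 2" "\<nexists>cs. is_cycle E cs" "finite A" "finite B" "A \<subseteq> E" "B \<subseteq> E"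
    and "\<forall>v. odd (degree A v) \<longleftrightarrow> odd (degree B v)"
  shows "A = B"
proof -
  have "(A - B) \<union> (B - A) = {}"
  proof (rule acyclic_even_degree_empty)
    show "\<nexists>cs. is_cycle ((A - B) \<union> (B - A)) cs"
      using assms(2,5,6) is_cycle_mono[of _ _ E] by blast
  qed (use assms even_degree_sym_diff[OF assms(3,4)] in auto)
  then show ?thesis
    by blast
qed

lemma path_tails_eq_degree_le_2:
  assumes fin: "finite F" and deg: "\<forall>x. degree F x \<le> 2"
    and "distinct (a # b # ps)" "path_edges (a # b # ps) \<subseteq> F" "degree F (last (b # ps)) \<le> 1"
    and "distinct (a # b # qs)" "path_edges (a # b # qs) \<subseteq> F" "degree F (last (b # qs)) \<le> 1"
  shows "ps = qs"
  using assms(3-)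
proof (induction ps arbitrary: a b qs)
  case Nil
  show ?case
  proof (cases qs)
    case (Cons c qs')
    then have "2 \<le> degree F b"
      using Nil.prems two_le_degree[OF fin, of b a c] by (auto simp: insert_commute)
    then show ?thesis
      using Nil.prems by simp
  qed simp
next
  case (Cons c ps)
  show ?case
  proof (cases qs)
    case Nil
    then have "2 \<le> degree F b"
      using Cons.prems two_le_degree[OF fin, of b a c] by (auto simp: insert_commute)
    then show ?thesis
      using Cons.prems Nil by simp
  next
    case (Cons d qs')
    have "c = d"
    proof (rule ccontr)
      assume "c \<noteq> d"
      then have "3 \<le> degree F b"
        using Cons.prems \<open>qs = d # qs'\<close> three_le_degree[OF fin, of b a c d] by (auto simp: insert_commute)
      then show False
        using deg by (metis not_less_eq_eq numeral_2_eq_2 numeral_3_eq_3)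
    qed
    then show ?thesis
      using Cons.IH[of b c qs'] Cons.prems \<open>qs = d # qs'\<close> by simp
  qed
qed

lemma path_unique_degree_le_2:
  assumes fin: "finite F" and deg: "\<forall>x. degree F x \<le> 2"
    and ps: "is_path F u v ps" and qs: "is_path F u w qs"
    and "degree F u \<le> 1" "degree F v \<le> 1" "degree F w \<le> 1" "u \<noteq> v" "u \<noteq> w"
  shows "ps = qs"
proof -
  obtain b ps' where ps': "ps = u # b # ps'"
    using ps \<open>u \<noteq> v\<close> by (rule is_path_ConsE)
  obtain c qs' where qs': "qs = u # c # qs'"
    using qs \<open>u \<noteq> w\<close> by (rule is_path_ConsE)
  have "b = c"
    using two_le_degree[OF fin, of u b c] ps qs ps' qs' \<open>degree F u \<le> 1\<close>
    by (force simp: is_path_iff)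
  then show ?thesis
    using path_tails_eq_degree_le_2[OF fin deg, of u b ps' qs'] assms(3-) ps' qs'
    by (auto simp: is_path_iff)
qed

lemma finite_tree_edges:
  assumes "is_tree V E"
  shows "finite E"
proof -
  have "E \<subseteq> Pow V" "finite V"
    using assms by (auto simp: is_tree_def)
  then show ?thesis
    by (simp add: finite_subset)
qed

lemma degree_pos_in_vertices:
  assumes "is_tree V E" "0 < degree E v"
  shows "v \<in> V"
proof -
  obtain e where "e \<in> E" "v \<in> e"
    using degree_pos_imp_edge[OF assms(2)] by blast
  moreover have "\<forall>e\<in>E. e \<subseteq> V"
    using assms(1) by (simp add: is_tree_def)
  ultimately show ?thesis
    by blast
qed

lemma tree_path_unique:
  assumes tree: "is_tree V E" and ps: "is_path E u v ps" and qs: "is_path E u v qs"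
  shows "ps = qs"
proof (cases "u = v")
  case True
  then show ?thesis
    using ps qs is_path_same by metis
next
  case False
  then have len: "2 \<le> length ps" "2 \<le> length qs"
    using ps qs by (simp_all add: is_path_length_ge_2)
  have "path_edges ps = path_edges qs"
    by (rule acyclic_edge_sets_eqI[of E])
      (use tree ps qs len in \<open>auto simp: is_tree_def is_path_iff odd_degree_path_edges_iff\<close>)
  then have "is_path (path_edges ps) u v qs"
    using qs by (simp add: is_path_iff)
  moreover have "is_path (path_edges ps) u v ps"
    using ps by (simp add: is_path_iff)
  ultimately show ?thesis
    using path_unique_degree_le_2[of "path_edges ps" u v ps v qs] ps len False
    by (auto simp: is_path_iff degree_path_edges_le_2 degree_path_edges)
qed

lemma pedges_eq:
  assumes "is_tree V E" "F \<subseteq> E" "is_path F u v ps"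
  shows "pedges F u v = path_edges ps"
proof -
  have "(THE ps. is_path F u v ps) = ps"
    using assms tree_path_unique is_path_mono by (metis (no_types, lifting) the_equality)
  then show ?thesis
    by (simp add: pedges_def)
qed

section \<open>Closest relative matchings\<close>

lemma
  assumes "crm E lf S M"
  shows crm_card: "p \<in> M \<Longrightarrow> card p = 2"
    and crm_Union: "\<Union>M = S"
    and crm_disjoint: "p \<in> M \<Longrightarrow> q \<in> M \<Longrightarrow> p \<noteq> q \<Longrightarrow> p \<inter> q = {}"
    and crm_path: "p \<in> M \<Longrightarrow> \<exists>ps. is_path E (lf (Min p)) (lf (Max p)) ps"
    and crm_edge_disjoint:
      "p \<in> M \<Longrightarrow> q \<in> M \<Longrightarrow> p \<noteq> q \<Longrightarrow> pair_edges E lf p \<inter> pair_edges E lf q = {}"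
  using assms unfolding crm_def by simp_all

lemma finite_crm: "crm E lf S M \<Longrightarrow> finite S \<Longrightarrow> finite M"
  by (metis crm_Union finite_UnionD)

lemma crm_insert:
  assumes M: "crm E lf S M" and p: "card p = 2" "p \<inter> S = {}"
    and path: "\<exists>ps. is_path E (lf (Min p)) (lf (Max p)) ps"
    and avoid: "\<forall>q\<in>M. pair_edges E lf p \<inter> pair_edges E lf q = {}"
  shows "crm E lf (p \<union> S) (insert p M)"
proof -
  have "q \<subseteq> S" if "q \<in> M" for q
    using crm_Union[OF M] that by blast
  then show ?thesis
    using M p path avoid unfolding crm_def by (auto simp: Int_commute)
qed

lemma crm_remove:
  assumes M: "crm E lf S M" and p: "p \<in> M"
  shows "crm E lf (S - p) (M - {p})"
proof -
  have "\<Union>(M - {p}) = S - p"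
    using crm_Union[OF M] crm_disjoint[OF M p] by blast
  then show ?thesis
    using M unfolding crm_def by auto
qed

lemma finite_pair_edges [simp]: "finite (pair_edges E lf p)"
  by (simp add: pair_edges_def pedges_def)

lemma pair_edges_doubleton:
  assumes tree: "is_tree V E" and "F \<subseteq> E" and ps: "is_path F (lf a) (lf b) ps"
  shows "pair_edges F lf {a, b} = path_edges ps"
proof (cases "a \<le> b")
  case True
  then show ?thesis
    using pedges_eq[OF assms] by (simp add: pair_edges_def)
next
  case False
  then show ?thesis
    using pedges_eq[OF tree \<open>F \<subseteq> E\<close> is_path_rev[OF ps]] by (simp add: pair_edges_def)
qed

lemma crm_pairE:
  assumes tree: "is_tree V E" and M: "crm E lf S M" and p: "p \<in> M" "a \<in> p"
  obtains b ps where "p = {a, b}" "a \<noteq> b" "is_path E (lf a) (lf b) ps"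
    "pair_edges E lf p = path_edges ps"
proof -
  obtain b where b: "p = {a, b}" "b \<noteq> a"
    using crm_card[OF M p(1)] p(2) by (rule card_2_memE)
  obtain ps where "is_path E (lf (Min p)) (lf (Max p)) ps"
    using crm_path[OF M p(1)] by blast
  then have "is_path E (lf a) (lf b) ps \<or> is_path E (lf b) (lf a) ps"
    using b by (cases "a \<le> b") (auto simp: min_def max_def)
  then obtain ps' where ps': "is_path E (lf a) (lf b) ps'"
    using is_path_rev[of E "lf b" "lf a" ps] by blast
  moreover have "pair_edges E lf p = path_edges ps'"
    using pair_edges_doubleton[OF tree order_refl ps'] b(1) by simp
  ultimately show ?thesis
    using b by (intro that) auto
qed

lemma odd_degree_pair_edges_iff:
  assumes tree: "is_tree V E" and inj: "inj_on lf {1..n}" and S: "S \<subseteq> {1..n}"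
    and M: "crm E lf S M" and p: "p \<in> M"
  shows "odd (degree (pair_edges E lf p) x) \<longleftrightarrow> x \<in> lf ` p"
proof -
  obtain a where "a \<in> p"
    using card_2_ex_mem crm_card[OF M p] by blast
  then obtain b ps where b: "p = {a, b}" "a \<noteq> b" "is_path E (lf a) (lf b) ps"
    "pair_edges E lf p = path_edges ps"
    using crm_pairE[OF tree M p] by blast
  moreover have "a \<in> {1..n}" "b \<in> {1..n}"
    using b(1) S crm_Union[OF M] p by auto
  then have "lf a \<noteq> lf b"
    using inj b(2) by (simp add: inj_on_contraD)
  then have "2 \<le> length ps"
    using is_path_length_ge_2[OF b(3)] by simp
  moreover have "distinct ps" "hd ps = lf a" "last ps = lf b"
    using b(3) by (simp_all add: is_path_iff)
  ultimately show ?thesis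
    using b(1,4) odd_degree_path_edges_iff[of ps x] by simp
qed

lemma card_crm_pairs_containing:
  assumes inj: "inj_on lf {1..n}" and S: "S \<subseteq> {1..n}" and M: "crm E lf S M"
  shows "card {p \<in> M. x \<in> lf ` p} = (if x \<in> lf ` S then 1 else 0)"
proof (cases "x \<in> lf ` S")
  case True
  then obtain a p where a: "a \<in> p" "p \<in> M" "x = lf a"
    using crm_Union[OF M] by blast
  have "q = p" if q: "q \<in> M" "x \<in> lf ` q" for q
  proof -
    obtain c where "c \<in> q" "x = lf c"
      using q(2) by blast
    then have "c = a"
      using inj S crm_Union[OF M] a q(1) by (auto dest: inj_onD)
    then show ?thesis
      using crm_disjoint[OF M] a \<open>c \<in> q\<close> q(1) by blast
  qed
  then have "{p \<in> M. x \<in> lf ` p} = {p}"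
    using a by blast
  then show ?thesis
    using True by simp
next
  case False
  then have none: "{p \<in> M. x \<in> lf ` p} = {}"
    using crm_Union[OF M] by blast
  show ?thesis
    unfolding none using False by simp
qed

definition matching_edges :: "'v set set \<Rightarrow> (nat \<Rightarrow> 'v) \<Rightarrow> nat set set \<Rightarrow> 'v set set" where
  "matching_edges E lf M = \<Union>(pair_edges E lf ` M)"

lemma finite_matching_edges: "finite M \<Longrightarrow> finite (matching_edges E lf M)"
  by (simp add: matching_edges_def)

lemma matching_edges_subset:
  assumes tree: "is_tree V E" and M: "crm E lf S M"
  shows "matching_edges E lf M \<subseteq> E"
proof -
  have "pair_edges E lf p \<subseteq> E" if p: "p \<in> M" for p
  proof -
    obtain a where "a \<in> p"
      using card_2_ex_mem crm_card[OF M p] by blast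
    then obtain b ps where "is_path E (lf a) (lf b) ps" "pair_edges E lf p = path_edges ps"
      using crm_pairE[OF tree M p] by blast
    then show ?thesis
      by (simp add: is_path_iff)
  qed
  then show ?thesis
    by (auto simp: matching_edges_def)
qed

lemma odd_degree_matching_edges_iff:
  assumes tree: "is_tree V E" and inj: "inj_on lf {1..n}" and S: "S \<subseteq> {1..n}"
    and M: "crm E lf S M"
  shows "odd (degree (matching_edges E lf M) x) \<longleftrightarrow> x \<in> lf ` S"
proof -
  have finM: "finite M"
    using finite_crm[OF M] finite_subset[OF S] by simp
  have "degree (matching_edges E lf M) x = (\<Sum>p\<in>M. degree (pair_edges E lf p) x)"
    unfolding matching_edges_def using crm_edge_disjoint[OF M]
    by (intro degree_UN_disjoint[OF finM]) auto
  moreover have "{p \<in> M. odd (degree (pair_edges E lf p) x)} = {p \<in> M. x \<in> lf ` p}"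
    using odd_degree_pair_edges_iff[OF tree inj S M] by blast
  ultimately have "odd (degree (matching_edges E lf M) x) \<longleftrightarrow> odd (card {p \<in> M. x \<in> lf ` p})"
    by (simp add: even_sum_iff[OF finM])
  then show ?thesis
    by (simp add: card_crm_pairs_containing[OF inj S M])
qed

lemma degree_matching_edges_le:
  assumes tree: "is_tree V E" and inj: "inj_on lf {1..n}"
    and leaf: "\<forall>a\<in>{1..n}. degree E (lf a) \<le> 1" and subcubic: "\<forall>v. degree E v \<le> 3"
    and S: "S \<subseteq> {1..n}" and M: "crm E lf S M"
  shows degree_matching_edges_le_2: "degree (matching_edges E lf M) x \<le> 2"
    and degree_matching_edges_leaf_le_1: "a \<in> S \<Longrightarrow> degree (matching_edges E lf M) (lf a) \<le> 1"
proof -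
  have le: "degree (matching_edges E lf M) y \<le> degree E y" for y
    using finite_tree_edges[OF tree] matching_edges_subset[OF tree M] by (rule degree_mono)
  show leaf_le: "degree (matching_edges E lf M) (lf a) \<le> 1" if "a \<in> S" for a
    using le[of "lf a"] leaf S that by force
  show "degree (matching_edges E lf M) x \<le> 2"
  proof (cases "x \<in> lf ` S")
    case True
    then show ?thesis
      using leaf_le by fastforce
  next
    case False
    then have "even (degree (matching_edges E lf M) x)"
      using odd_degree_matching_edges_iff[OF tree inj S M] by blast
    moreover have "degree (matching_edges E lf M) x \<le> 3"
      using le[of x] subcubic by (meson order_trans)
    ultimately show ?thesis
      by (cases "degree (matching_edges E lf M) x = 3") auto
  qed
qed

lemma crm_matching_pathE:
  assumes tree: "is_tree V E" and M: "crm E lf S M" and p: "p \<in> M" "a \<in> p"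
  obtains b ps where "p = {a, b}" "a \<noteq> b" "b \<in> S" "is_path (matching_edges E lf M) (lf a) (lf b) ps"
proof -
  obtain b ps where b: "p = {a, b}" "a \<noteq> b" "is_path E (lf a) (lf b) ps"
    "pair_edges E lf p = path_edges ps"
    using crm_pairE[OF tree M p] by blast
  have "pair_edges E lf p \<subseteq> matching_edges E lf M"
    using p(1) by (auto simp: matching_edges_def)
  then have "is_path (matching_edges E lf M) (lf a) (lf b) ps"
    using b(3,4) by (simp add: is_path_iff)
  moreover have "b \<in> S"
    unfolding crm_Union[OF M, symmetric] using p(1) b(1) by blast
  ultimately show ?thesis
    using b(1,2) that by blast
qed

lemma crm_subset_of_matching_edges_eq:
  assumes tree: "is_tree V E" and inj: "inj_on lf {1..n}" and S: "S \<subseteq> {1..n}"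
    and M: "crm E lf S M" and M': "crm E lf S M'"
    and same: "matching_edges E lf M = matching_edges E lf M'"
    and deg: "\<forall>x. degree (matching_edges E lf M) x \<le> 2"
    and leaf: "\<forall>a\<in>S. degree (matching_edges E lf M) (lf a) \<le> 1"
  shows "M \<subseteq> M'"
proof
  fix p
  assume p: "p \<in> M"
  obtain a where a: "a \<in> p"
    using card_2_ex_mem crm_card[OF M p] by blast
  then have "a \<in> S"
    unfolding crm_Union[OF M, symmetric] using p by blast
  then obtain q where q: "q \<in> M'" "a \<in> q"
    unfolding crm_Union[OF M', symmetric] by blast
  obtain b ps where b: "p = {a, b}" "a \<noteq> b" "b \<in> S"
    "is_path (matching_edges E lf M) (lf a) (lf b) ps"
    using crm_matching_pathE[OF tree M p a] by blast
  obtain c qs where c: "q = {a, c}" "a \<noteq> c" "c \<in> S"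
    "is_path (matching_edges E lf M) (lf a) (lf c) qs"
    using crm_matching_pathE[OF tree M' q] unfolding same by blast
  have "a \<in> {1..n}" "b \<in> {1..n}" "c \<in> {1..n}"
    using \<open>a \<in> S\<close> b(3) c(3) S by auto
  then have "lf a \<noteq> lf b" "lf a \<noteq> lf c" and lf_bc: "lf b = lf c \<Longrightarrow> b = c"
    using inj b(2) c(2) by (simp_all add: inj_on_contraD inj_on_eq_iff)
  moreover have "finite (matching_edges E lf M)"
    using finite_matching_edges[OF finite_crm[OF M]] finite_subset[OF S] by simp
  ultimately have "ps = qs"
    using path_unique_degree_le_2[OF _ deg b(4) c(4)] leaf \<open>a \<in> S\<close> b(3) c(3) by blast
  then have "b = c"
    using b(4) c(4) lf_bc by (simp add: is_path_iff)
  then show "p \<in> M'"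
    using b(1) c(1) q(1) by simp
qed

lemma crm_unique:
  assumes tree: "is_tree V E" and inj: "inj_on lf {1..n}"
    and leaf: "\<forall>a\<in>{1..n}. degree E (lf a) \<le> 1" and subcubic: "\<forall>v. degree E v \<le> 3"
    and S: "S \<subseteq> {1..n}" and M: "crm E lf S M" and M': "crm E lf S M'"
  shows "M = M'"
proof -
  have fin: "finite M" "finite M'"
    using finite_crm[OF M] finite_crm[OF M'] finite_subset[OF S] by simp_all
  have same: "matching_edges E lf M = matching_edges E lf M'"
  proof (rule acyclic_edge_sets_eqI[of E])
    show "finite (matching_edges E lf M)" "finite (matching_edges E lf M')"
      using fin by (simp_all add: finite_matching_edges)
    show "matching_edges E lf M \<subseteq> E" "matching_edges E lf M' \<subseteq> E"
      using matching_edges_subset[OF tree] M M' by blast+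
    show "\<forall>v. odd (degree (matching_edges E lf M) v) \<longleftrightarrow> odd (degree (matching_edges E lf M') v)"
      using odd_degree_matching_edges_iff[OF tree inj S] M M' by blast
  qed (use tree in \<open>auto simp: is_tree_def\<close>)
  note bounds = degree_matching_edges_le_2[OF tree inj leaf subcubic S]
    degree_matching_edges_leaf_le_1[OF tree inj leaf subcubic S]
  have "M \<subseteq> M'"
    using crm_subset_of_matching_edges_eq[OF tree inj S M M' same] bounds[OF M] by blast
  moreover have "M' \<subseteq> M"
    using crm_subset_of_matching_edges_eq[OF tree inj S M' M same[symmetric]] bounds[OF M'] by blast
  ultimately show ?thesis
    by blast
qed

lemma alphaF_eq:
  assumes tree: "is_tree V E" and inj: "inj_on lf {1..n}"
    and leaf: "\<forall>a\<in>{1..n}. degree E (lf a) \<le> 1" and subcubic: "\<forall>v. degree E v \<le> 3"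
    and S: "S \<subseteq> {1..n}" and M: "crm E lf S M"
  shows "alphaF E lf \<alpha> S = (\<Prod>p\<in>M. \<alpha> p)"
proof -
  have "(THE M. crm E lf S M) = M"
  proof (rule the_equality)
    show "M' = M" if "crm E lf S M'" for M'
      using crm_unique[OF tree inj leaf subcubic S M that] by simp
  qed (rule M)
  then show ?thesis
    by (simp add: alphaF_def)
qed

definition matchable_sets :: "'v set set \<Rightarrow> (nat \<Rightarrow> 'v) \<Rightarrow> nat \<Rightarrow> nat set set" where
  "matchable_sets F lf n = {S. S \<subseteq> {1..n} \<and> even (card S) \<and> (\<exists>M. crm F lf S M)}"

lemma fF_eq_sum_matchable_sets:
  "fF F lf n \<alpha> x = (\<Sum>S\<in>matchable_sets F lf n. alphaF F lf \<alpha> S * (\<Prod>k\<in>S. x k)) / 2 ^ n"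
  by (simp add: fF_def matchable_sets_def)

lemma finite_matchable_sets: "finite (matchable_sets F lf n)"
  by (rule finite_subset[of _ "Pow {1..n}"]) (auto simp: matchable_sets_def)

section \<open>Cutting the path between two leaves\<close>

locale leaf_path_cut =
  fixes V :: "'v set" and E :: "'v set set" and lf :: "nat \<Rightarrow> 'v" and n i j :: nat
  assumes tree: "is_tree V E" and inj: "inj_on lf {1..n}"
    and leaf: "\<forall>a\<in>{1..n}. degree E (lf a) = 1" and subcubic: "\<forall>v. degree E v \<le> 3"
    and ij: "i \<in> {1..n}" "j \<in> {1..n}" "i \<noteq> j"
begin

abbreviation Pij :: "'v set set" where
  "Pij \<equiv> pedges E (lf i) (lf j)"

text \<open>The forest written T \<setminus> {i,j} in the paper.\<close>

abbreviation Ecut :: "'v set set" where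
  "Ecut \<equiv> E - Pij"

lemma leaf_le_1: "\<forall>a\<in>{1..n}. degree E (lf a) \<le> 1"
  using leaf by simp

lemma lf_ij_neq: "lf i \<noteq> lf j"
  using inj ij by (simp add: inj_on_contraD)

lemma path_ijE:
  obtains pij where "is_path E (lf i) (lf j) pij" "path_edges pij = Pij"
proof -
  have "lf i \<in> V" "lf j \<in> V"
    using leaf ij degree_pos_in_vertices[OF tree] by simp_all
  then obtain pij where "is_path E (lf i) (lf j) pij"
    using tree unfolding is_tree_def by blast
  then show ?thesis
    using that pedges_eq[OF tree order_refl] by blast
qed

lemma pair_edges_ij: "pair_edges E lf {i, j} = Pij"
proof -
  obtain pij where "is_path E (lf i) (lf j) pij" "path_edges pij = Pij"
    by (rule path_ijE)
  then show ?thesis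
    using pair_edges_doubleton[OF tree order_refl] by simp
qed

lemma Pij_subset: "Pij \<subseteq> E"
proof -
  obtain pij where "is_path E (lf i) (lf j) pij" "path_edges pij = Pij"
    by (rule path_ijE)
  then show ?thesis
    by (auto simp: is_path_iff)
qed

lemma pair_edges_eq:
  "F \<subseteq> E \<Longrightarrow> is_path F (lf (Min p)) (lf (Max p)) ps \<Longrightarrow> pair_edges F lf p = path_edges ps"
  unfolding pair_edges_def by (rule pedges_eq[OF tree])

lemma pair_path_cut_iff:
  "(\<exists>ps. is_path Ecut (lf (Min p)) (lf (Max p)) ps) \<longleftrightarrow>
     (\<exists>ps. is_path E (lf (Min p)) (lf (Max p)) ps) \<and> pair_edges E lf p \<inter> Pij = {}"
proof
  assume "\<exists>ps. is_path Ecut (lf (Min p)) (lf (Max p)) ps"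
  then obtain ps where ps: "is_path Ecut (lf (Min p)) (lf (Max p)) ps"
    by blast
  then have "is_path E (lf (Min p)) (lf (Max p)) ps"
    by (rule is_path_mono) blast
  moreover have "path_edges ps \<subseteq> Ecut"
    using ps by (simp add: is_path_iff)
  ultimately show "(\<exists>ps. is_path E (lf (Min p)) (lf (Max p)) ps) \<and> pair_edges E lf p \<inter> Pij = {}"
    using pair_edges_eq[OF order_refl] by blast
next
  assume "(\<exists>ps. is_path E (lf (Min p)) (lf (Max p)) ps) \<and> pair_edges E lf p \<inter> Pij = {}"
  then obtain ps where "is_path E (lf (Min p)) (lf (Max p)) ps" "path_edges ps \<inter> Pij = {}"
    using pair_edges_eq[OF order_refl] by metis
  then have "is_path Ecut (lf (Min p)) (lf (Max p)) ps"
    by (auto simp: is_path_iff)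
  then show "\<exists>ps. is_path Ecut (lf (Min p)) (lf (Max p)) ps"
    by blast
qed

lemma pair_edges_cut:
  assumes "is_path Ecut (lf (Min p)) (lf (Max p)) ps"
  shows "pair_edges Ecut lf p = pair_edges E lf p"
proof -
  have "is_path E (lf (Min p)) (lf (Max p)) ps"
    using assms by (rule is_path_mono) blast
  then show ?thesis
    using assms pair_edges_eq by (metis Diff_subset order_refl)
qed

lemma crm_cut_iff:
  "crm Ecut lf S M \<longleftrightarrow> crm E lf S M \<and> (\<forall>p\<in>M. pair_edges E lf p \<inter> Pij = {})"
proof -
  have paths: "(\<forall>p\<in>M. \<exists>ps. is_path Ecut (lf (Min p)) (lf (Max p)) ps) \<longleftrightarrow>
      (\<forall>p\<in>M. \<exists>ps. is_path E (lf (Min p)) (lf (Max p)) ps) \<and> (\<forall>p\<in>M. pair_edges E lf p \<inter> Pij = {})"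
    using pair_path_cut_iff by blast
  moreover have
    "(\<forall>p\<in>M. \<forall>q\<in>M. p \<noteq> q \<longrightarrow> pair_edges Ecut lf p \<inter> pair_edges Ecut lf q = {}) \<longleftrightarrow>
     (\<forall>p\<in>M. \<forall>q\<in>M. p \<noteq> q \<longrightarrow> pair_edges E lf p \<inter> pair_edges E lf q = {})"
    if "\<forall>p\<in>M. \<exists>ps. is_path Ecut (lf (Min p)) (lf (Max p)) ps"
  proof -
    have "\<forall>p\<in>M. pair_edges Ecut lf p = pair_edges E lf p"
      using that pair_edges_cut by blast
    then show ?thesis
      by simp
  qed
  ultimately show ?thesis
    unfolding crm_def by argo
qed

lemma leaf_path_meets_Pij:
  assumes a: "a \<in> {i, j}" and ps: "is_path E (lf a) y ps" "lf a \<noteq> y"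
  shows "path_edges ps \<inter> Pij \<noteq> {}"
proof -
  obtain w ws where "ps = lf a # w # ws"
    using ps by (rule is_path_ConsE)
  then have e: "{lf a, w} \<in> path_edges ps" "path_edges ps \<subseteq> E"
    using ps by (simp_all add: is_path_iff)
  obtain qs y where qs: "is_path E (lf a) y qs" "lf a \<noteq> y" "path_edges qs = Pij"
  proof -
    obtain pij where pij: "is_path E (lf i) (lf j) pij" "path_edges pij = Pij"
      by (rule path_ijE)
    show ?thesis
    proof (cases "a = i")
      case True
      then show ?thesis
        using that pij lf_ij_neq by blast
    next
      case False
      then have "a = j"
        using a by blast
      then show ?thesis
        using that[where qs = "rev pij" and y = "lf i"] is_path_rev[OF pij(1)] pij(2) lf_ij_neq by simp
    qed
  qed
  obtain w' ws' where "qs = lf a # w' # ws'"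
    using qs(1,2) by (rule is_path_ConsE)
  then have e': "{lf a, w'} \<in> Pij"
    using qs(3) by auto
  have "degree E (lf a) = 1"
    using leaf a ij by auto
  \<comment> \<open>The leaf lf a has a single edge, which therefore lies on both paths.\<close>
  then have "{lf a, w} = {lf a, w'}"
    by (rule degree_one_edge_unique[of E "lf a"]) (use e e' Pij_subset in auto)
  then show ?thesis
    using e e' by auto
qed

lemma leaves_ij_notin_cut_matching:
  assumes M: "crm Ecut lf S M" and S: "S \<subseteq> {1..n}"
  shows "i \<notin> S" "j \<notin> S"
proof -
  have "a \<notin> S" if a: "a \<in> {i, j}" for a
  proof
    assume "a \<in> S"
    then obtain p where p: "p \<in> M" "a \<in> p"
      using crm_Union[OF M] by blast
    have ME: "crm E lf S M"
      using M crm_cut_iff by blast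
    obtain b ps where b: "p = {a, b}" "a \<noteq> b" "is_path E (lf a) (lf b) ps"
      "pair_edges E lf p = path_edges ps"
      using crm_pairE[OF tree ME p] by blast
    have "b \<in> {1..n}"
      using crm_Union[OF M] p b(1) S by blast
    then have "lf a \<noteq> lf b"
      using a ij b(2) inj by (auto simp: inj_on_contraD)
    then have "pair_edges E lf p \<inter> Pij \<noteq> {}"
      using leaf_path_meets_Pij[OF a b(3)] b(4) by simp
    then show False
      using M p crm_cut_iff by blast
  qed
  then show "i \<notin> S" "j \<notin> S"
    by simp_all
qed

lemma alphaF_cut_eq:
  assumes M: "crm Ecut lf T M" and T: "T \<subseteq> {1..n}"
  shows "alphaF Ecut lf \<alpha> T = (\<Prod>p\<in>M. \<alpha> p)"
proof -
  have "(THE M. crm Ecut lf T M) = M"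
  proof (rule the_equality)
    show "M' = M" if "crm Ecut lf T M'" for M'
      using crm_unique[OF tree inj leaf_le_1 subcubic T] M that crm_cut_iff by simp
  qed (rule M)
  then show ?thesis
    by (simp add: alphaF_def)
qed

lemma crm_insert_ij:
  assumes M: "crm Ecut lf T M" and T: "T \<subseteq> {1..n}"
  shows "crm E lf (insert i (insert j T)) (insert {i, j} M)"
proof -
  obtain pij where pij: "is_path E (lf i) (lf j) pij"
    by (rule path_ijE)
  then have "\<exists>ps. is_path E (lf (Min {i, j})) (lf (Max {i, j})) ps"
    using is_path_rev[OF pij] by (cases "i \<le> j") (auto simp: min_def max_def)
  moreover have "{i, j} \<inter> T = {}"
    using leaves_ij_notin_cut_matching[OF M T] by blast
  ultimately have "crm E lf ({i, j} \<union> T) (insert {i, j} M)"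
    using M ij(3) pair_edges_ij by (intro crm_insert) (auto simp: crm_cut_iff)
  then show ?thesis
    by simp
qed

lemma crm_remove_ij:
  assumes M: "crm E lf S M" and ijM: "{i, j} \<in> M"
  shows "crm Ecut lf (S - {i, j}) (M - {{i, j}})"
  using crm_remove[OF M ijM] crm_edge_disjoint[OF M _ ijM] pair_edges_ij
  by (auto simp: crm_cut_iff)

lemma insert_ij_matchable:
  assumes "T \<in> matchable_sets Ecut lf n"
  shows "i \<notin> T" "j \<notin> T" "insert i (insert j T) \<in> matchable_sets E lf n"
proof -
  obtain M where M: "crm Ecut lf T M" and T: "T \<subseteq> {1..n}" "even (card T)"
    using assms unfolding matchable_sets_def by blast
  show ij_notin: "i \<notin> T" "j \<notin> T"
    using leaves_ij_notin_cut_matching[OF M T(1)] by simp_all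
  have "finite T"
    using T(1) finite_subset by blast
  then show "insert i (insert j T) \<in> matchable_sets E lf n"
    using crm_insert_ij[OF M T(1)] T ij ij_notin by (auto simp: matchable_sets_def)
qed

lemma remove_ij_matchable:
  assumes S: "S \<in> matchable_sets E lf n" and M: "crm E lf S M" and ijM: "{i, j} \<in> M"
  shows "S - {i, j} \<in> matchable_sets Ecut lf n" "S = insert i (insert j (S - {i, j}))"
proof -
  have sub: "{i, j} \<subseteq> S"
    using crm_Union[OF M] ijM by blast
  then show "S = insert i (insert j (S - {i, j}))"
    by blast
  have "finite S"
    using S finite_subset by (auto simp: matchable_sets_def)
  then have "card (S - {i, j}) + 2 = card S"
    using sub ij(3) card_mono[of S "{i, j}"] by (simp add: card_Diff_subset)
  moreover have "even (card S)"
    using S by (simp add: matchable_sets_def)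
  ultimately have "even (card (S - {i, j}))"
    by presburger
  then show "S - {i, j} \<in> matchable_sets Ecut lf n"
    using S crm_remove_ij[OF M ijM] by (auto simp: matchable_sets_def)
qed

lemma agree_on_matching:
  assumes agree: "\<forall>k\<in>{1..n}. \<forall>l\<in>{1..n}. k \<noteq> l \<longrightarrow> {k, l} \<noteq> {i, j} \<longrightarrow> \<alpha> {k, l} = \<beta> {k, l}"
    and M: "crm F lf S M" and S: "S \<subseteq> {1..n}" and p: "p \<in> M" "p \<noteq> {i, j}"
  shows "\<alpha> p = \<beta> p"
proof -
  obtain a b where "p = {a, b}" "a \<noteq> b"
    using crm_card[OF M p(1)] by (auto simp: card_2_iff)
  moreover have "p \<subseteq> {1..n}"
    using crm_Union[OF M] S p(1) by blast
  ultimately show ?thesis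
    using agree p(2) by auto
qed

lemma alphaF_eq_unless_ij:
  assumes agree: "\<forall>k\<in>{1..n}. \<forall>l\<in>{1..n}. k \<noteq> l \<longrightarrow> {k, l} \<noteq> {i, j} \<longrightarrow> \<alpha> {k, l} = \<beta> {k, l}"
    and M: "crm E lf S M" and S: "S \<subseteq> {1..n}" and ijM: "{i, j} \<notin> M"
  shows "alphaF E lf \<alpha> S = alphaF E lf \<beta> S"
proof -
  have "(\<Prod>p\<in>M. \<alpha> p) = (\<Prod>p\<in>M. \<beta> p)"
    using agree_on_matching[OF agree M S] ijM by (intro prod.cong) auto
  then show ?thesis
    using alphaF_eq[OF tree inj leaf_le_1 subcubic S M] by simp
qed

lemma alphaF_eq_unless_insert_ij:
  assumes agree: "\<forall>k\<in>{1..n}. \<forall>l\<in>{1..n}. k \<noteq> l \<longrightarrow> {k, l} \<noteq> {i, j} \<longrightarrow> \<alpha> {k, l} = \<beta> {k, l}"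
    and S: "S \<in> matchable_sets E lf n" "S \<notin> (\<lambda>T. insert i (insert j T)) ` matchable_sets Ecut lf n"
  shows "alphaF E lf \<alpha> S = alphaF E lf \<beta> S"
proof -
  obtain M where M: "crm E lf S M" "S \<subseteq> {1..n}"
    using S(1) unfolding matchable_sets_def by blast
  have "{i, j} \<notin> M"
  proof
    assume ijM: "{i, j} \<in> M"
    then have "S - {i, j} \<in> matchable_sets Ecut lf n" "S = insert i (insert j (S - {i, j}))"
      using remove_ij_matchable[OF S(1) M(1)] by simp_all
    then show False
      using S(2) by blast
  qed
  then show ?thesis
    using alphaF_eq_unless_ij[OF agree M] by simp
qed

lemma alphaF_diff_insert_ij:
  assumes agree: "\<forall>k\<in>{1..n}. \<forall>l\<in>{1..n}. k \<noteq> l \<longrightarrow> {k, l} \<noteq> {i, j} \<longrightarrow> \<alpha> {k, l} = \<beta> {k, l}"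
    and M: "crm Ecut lf T M" and T: "T \<subseteq> {1..n}"
  shows "alphaF E lf \<alpha> (insert i (insert j T)) - alphaF E lf \<beta> (insert i (insert j T)) =
    (\<alpha> {i, j} - \<beta> {i, j}) * alphaF Ecut lf (gammaV E lf i j \<alpha>) T"
proof -
  have M': "crm E lf (insert i (insert j T)) (insert {i, j} M)"
    using M T by (rule crm_insert_ij)
  have S': "insert i (insert j T) \<subseteq> {1..n}"
    using T ij by simp
  have fin: "finite M" and ijM: "{i, j} \<notin> M"
    using finite_crm[OF M] finite_subset[OF T] leaves_ij_notin_cut_matching[OF M T] crm_Union[OF M]
    by auto
  have "(\<Prod>p\<in>M. \<alpha> p) = (\<Prod>p\<in>M. \<beta> p)"
    using agree_on_matching[OF agree M T] ijM by (intro prod.cong) auto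
  moreover have "(\<Prod>p\<in>M. gammaV E lf i j \<alpha> p) = (\<Prod>p\<in>M. \<alpha> p)"
    using M by (auto simp: gammaV_def crm_cut_iff intro: prod.cong)
  ultimately show ?thesis
    using alphaF_eq[OF tree inj leaf_le_1 subcubic S' M'] alphaF_cut_eq[OF M T] fin ijM
    by (simp add: algebra_simps)
qed

theorem fF_diff:
  assumes agree: "\<forall>k\<in>{1..n}. \<forall>l\<in>{1..n}. k \<noteq> l \<longrightarrow> {k, l} \<noteq> {i, j} \<longrightarrow> \<alpha> {k, l} = \<beta> {k, l}"
  shows "fF E lf n \<alpha> x - fF E lf n \<beta> x =
    x i * x j * (\<alpha> {i, j} - \<beta> {i, j}) * fF Ecut lf n (gammaV E lf i j \<alpha>) x"
proof -
  define lift where "lift T = insert i (insert j T)" for T :: "nat set"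
  define d where "d S = (alphaF E lf \<alpha> S - alphaF E lf \<beta> S) * (\<Prod>k\<in>S. x k)" for S
  have d_lift: "d (lift T) = x i * x j * (\<alpha> {i, j} - \<beta> {i, j}) *
      (alphaF Ecut lf (gammaV E lf i j \<alpha>) T * (\<Prod>k\<in>T. x k))"
    if T: "T \<in> matchable_sets Ecut lf n" for T
  proof -
    obtain M where "crm Ecut lf T M" "T \<subseteq> {1..n}"
      using T unfolding matchable_sets_def by blast
    moreover have "finite T"
      using \<open>T \<subseteq> {1..n}\<close> finite_subset by blast
    ultimately show ?thesis
      using alphaF_diff_insert_ij[OF agree] insert_ij_matchable(1,2)[OF T] ij(3)
      by (simp add: d_def lift_def)
  qed
  have d_vanish: "d S = 0" if "S \<in> matchable_sets E lf n - lift ` matchable_sets Ecut lf n" for S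
    using alphaF_eq_unless_insert_ij[OF agree] that by (simp add: d_def lift_def)
  have "lift T - {i, j} = T" if "T \<in> matchable_sets Ecut lf n" for T
    using insert_ij_matchable(1,2)[OF that] by (auto simp: lift_def)
  then have inj: "inj_on lift (matchable_sets Ecut lf n)"
    by (rule inj_on_inverseI)
  have "fF E lf n \<alpha> x - fF E lf n \<beta> x = (\<Sum>S\<in>matchable_sets E lf n. d S) / 2 ^ n"
    by (simp add: fF_eq_sum_matchable_sets d_def sum_subtractf left_diff_distrib diff_divide_distrib)
  also have "(\<Sum>S\<in>matchable_sets E lf n. d S) = (\<Sum>S\<in>lift ` matchable_sets Ecut lf n. d S)"
    using insert_ij_matchable(3) d_vanish
    by (intro sum.mono_neutral_right finite_matchable_sets) (auto simp: lift_def)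
  also have "\<dots> = (\<Sum>T\<in>matchable_sets Ecut lf n. d (lift T))"
    by (rule sum.reindex_cong[OF inj]) simp_all
  also have "\<dots> = x i * x j * (\<alpha> {i, j} - \<beta> {i, j}) *
      (\<Sum>T\<in>matchable_sets Ecut lf n. alphaF Ecut lf (gammaV E lf i j \<alpha>) T * (\<Prod>k\<in>T. x k))"
    by (simp add: d_lift sum_distrib_left)
  finally show ?thesis
    by (simp add: fF_eq_sum_matchable_sets)
qed

end

theorem lemma6:
  fixes V :: "'v set" and E :: "'v set set" and lf :: "nat \<Rightarrow> 'v" and n i j :: nat
    and \<alpha> \<beta> :: "nat set \<Rightarrow> real" and x :: "nat \<Rightarrow> real"
  assumes tree: "is_tree V E"
    and leaves: "bij_betw lf {1..n} {v \<in> V. degree E v = 1}"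
    and deg3: "\<forall>v\<in>V. degree E v \<noteq> 1 \<longrightarrow> degree E v = 3"
    and ij: "i \<in> {1..n}" "j \<in> {1..n}" "i \<noteq> j"
    and \<alpha>_rng: "\<forall>k\<in>{1..n}. \<forall>l\<in>{1..n}. k \<noteq> l \<longrightarrow> \<bar>\<alpha> {k, l}\<bar> \<le> 1"
    and \<beta>_rng: "\<forall>k\<in>{1..n}. \<forall>l\<in>{1..n}. k \<noteq> l \<longrightarrow> \<bar>\<beta> {k, l}\<bar> \<le> 1"
    and agree: "\<forall>k\<in>{1..n}. \<forall>l\<in>{1..n}. k \<noteq> l \<longrightarrow> {k, l} \<noteq> {i, j} \<longrightarrow> \<alpha> {k, l} = \<beta> {k, l}"
    and x: "\<forall>k\<in>{1..n}. x k \<in> {-1, 1}"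
  shows "fF E lf n \<alpha> x - fF E lf n \<beta> x =
           x i * x j * (\<alpha> {i, j} - \<beta> {i, j}) *
           fF (E - pedges E (lf i) (lf j)) lf n (gammaV E lf i j \<alpha>) x"
proof -
  have inj: "inj_on lf {1..n}"
    using leaves by (rule bij_betw_imp_inj_on)
  have leaf: "\<forall>a\<in>{1..n}. degree E (lf a) = 1"
    using leaves by (auto simp: bij_betw_def)
  have subcubic: "\<forall>v. degree E v \<le> 3"
  proof
    fix v
    show "degree E v \<le> 3"
    proof (cases "0 < degree E v")
      case True
      then have "v \<in> V"
        by (rule degree_pos_in_vertices[OF tree])
      then show ?thesis
        using deg3 by (cases "degree E v = 1") auto
    qed simp
  qed
  interpret leaf_path_cut V E lf n i j
    using tree inj leaf subcubic ij by unfold_locales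
  show ?thesis
    by (rule fF_diff[OF agree])
qed

end
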